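(* Let $\triangle ABC$ be isosceles with base angles $\angle A=\angle B=80^\circ$ (so $\angle C=20^\circ$). For each side of $\triangle ABC$, consider an equilateral triangle of largest area contained in the closed triangle $\triangle ABC$ having one of its sides lying on that side. Then these three largest equilateral triangles (one for each of the sides $BC$, $CA$, $AB$) are congruent.
   Context: An equilateral triangle of largest area contained in $\triangle ABC$ with one side lying on a given side of $\triangle ABC$ is called the wedged equilateral triangle (WET) on that side; it need not have all three vertices on the boundary of $\triangle ABC$. *)

theory Defs
  imports "HOL-Analysis.Analysis"
begin

definition angle_at :: "complex \<Rightarrow> complex \<Rightarrow> complex \<Rightarrow> real" where
  "angle_at V X Y = arccos (((X - V) \<bullet> (Y - V)) / (norm (X - V) * norm (Y - V)))"

definition tri_area :: "complex \<Rightarrow> complex \<Rightarrow> complex \<Rightarrow> real" where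
  "tri_area P Q R = \<bar>Im (cnj (Q - P) * (R - P))\<bar> / 2"

definition equilateral :: "complex \<Rightarrow> complex \<Rightarrow> complex \<Rightarrow> bool" where
  "equilateral P Q R \<longleftrightarrow> dist P Q > 0 \<and> dist P Q = dist Q R \<and> dist Q R = dist R P"

definition inscribed_on_side ::
  "complex \<Rightarrow> complex \<Rightarrow> complex \<Rightarrow> complex \<Rightarrow> complex \<Rightarrow> complex \<Rightarrow> complex \<Rightarrow> complex \<Rightarrow> bool" where
  "inscribed_on_side A B C X Y P Q R \<longleftrightarrow>
     equilateral P Q R \<and> closed_segment P Q \<subseteq> closed_segment X Y \<and>
     convex hull {P, Q, R} \<subseteq> convex hull {A, B, C}"

definition is_WET ::
  "complex \<Rightarrow> complex \<Rightarrow> complex \<Rightarrow> complex \<Rightarrow> complex \<Rightarrow> complex \<Rightarrow> complex \<Rightarrow> complex \<Rightarrow> bool" where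
  "is_WET A B C X Y P Q R \<longleftrightarrow>
     inscribed_on_side A B C X Y P Q R \<and>
     (\<forall>P' Q' R'. inscribed_on_side A B C X Y P' Q' R' \<longrightarrow> tri_area P' Q' R' \<le> tri_area P Q R)"

text \<open>Congruence of triangles (SSS, with corresponding vertices in the given order;
  for equilateral triangles the vertex order is irrelevant).\<close>
definition tri_congruent ::
  "complex \<Rightarrow> complex \<Rightarrow> complex \<Rightarrow> complex \<Rightarrow> complex \<Rightarrow> complex \<Rightarrow> bool" where
  "tri_congruent P Q R P' Q' R' \<longleftrightarrow>
     dist P Q = dist P' Q' \<and> dist Q R = dist Q' R' \<and> dist R P = dist R' P'"

end

theory Submission
  imports Defs
begin

(* Since both base angles are 80 degrees the triangle is isosceles, so a similarity, possibly
   orientation reversing, maps it to the triangle A = 1, B = cis 20, C = 0 (degrees).  For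
   equilateral triangles, maximising the area is maximising the side length d.  On AB the
   equilateral triangle over the whole side fits, since both adjacent angles exceed 60 degrees,
   so d = |AB| = 2 sin 10.  On CA the apex sits at height (sqrt 3 / 2) d above the midpoint of
   the base, which is at most 1 - d/2 away from C; staying below the side CB, at 20 degrees to
   CA, gives d sin 80 <= sin 20, i.e. again d <= 2 sin 10, with equality when the base ends at A
   and the apex lies on CB.  The side BC is the mirror image of CA.  So the three WETs all have
   side 2 sin 10 |CA|. *)

lemma unimodular_eq_cis:
  assumes "norm u = 1" and "Re u = cos t"
  shows "u = cis t \<or> u = cis (- t)"
proof -
  have "(cos t)\<^sup>2 + (Im u)\<^sup>2 = 1"
    using assms cmod_power2[of u] by simp
  then have "(Im u)\<^sup>2 = (sin t)\<^sup>2"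
    using sin_cos_squared_add[of t] by linarith
  then have "Im u = sin t \<or> Im u = - sin t"
    by (simp add: power2_eq_iff)
  then show ?thesis
    using assms(2) by (auto simp: complex_eq_iff)
qed

lemma inner_mult_right_complex: "inner z (z * w) = (norm z)\<^sup>2 * Re w"
  unfolding cmod_power2 by (simp add: inner_complex_def algebra_simps power2_eq_square)

lemma inner_eq_cos_angle_at:
  "inner (X - V) (Y - V) = cos (angle_at V X Y) * (norm (X - V) * norm (Y - V))"
proof (cases "norm (X - V) * norm (Y - V) = 0")
  case True
  then show ?thesis by auto
next
  case False
  define q where "q = inner (X - V) (Y - V) / (norm (X - V) * norm (Y - V))"
  have "\<bar>q\<bar> \<le> 1"
    using Cauchy_Schwarz_ineq2[of "X - V" "Y - V"] False
    by (simp add: q_def abs_divide divide_le_eq_1)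
  then have "cos (angle_at V X Y) = q"
    unfolding angle_at_def q_def[symmetric] by (intro cos_arccos) auto
  then show ?thesis
    using False by (simp add: q_def)
qed

(* Junk value: a degenerate angle is arccos (0 / 0) = arccos 0. *)
lemma angle_at_same: "angle_at V V Y = pi / 2"
  by (simp add: angle_at_def)

lemma dist_eq_if_base_angles_eq:
  assumes "angle_at A B C = angle_at B C A" and "0 < angle_at A B C" and "angle_at A B C < pi"
  shows "dist C A = dist C B"
proof (cases "A = B")
  case False
  define k where "k = cos (angle_at A B C)"
  define u where "u = C - A"
  define v where "v = B - A"
  have "0 < (sin (angle_at A B C))\<^sup>2"
    using sin_gt_zero[OF assms(2,3)] by simp
  then have "k\<^sup>2 < 1"
    using sin_cos_squared_add[of "angle_at A B C"] unfolding k_def by linarith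
  have at_A: "inner v u = k * (norm v * norm u)"
    using inner_eq_cos_angle_at[of B A C] by (simp add: k_def u_def v_def)
  have at_B: "(norm v)\<^sup>2 - inner v u = k * (norm v * norm (u - v))"
    using inner_eq_cos_angle_at[of C B A] assms(1)
    by (simp add: k_def u_def v_def norm_minus_commute inner_diff power2_norm_eq_inner
        inner_commute algebra_simps)
  have "(1 - k\<^sup>2) * (norm v)\<^sup>2 * (norm u)\<^sup>2 = (norm v)\<^sup>2 * (norm u)\<^sup>2 - (inner v u)\<^sup>2"
    unfolding at_A by (simp add: power2_eq_square algebra_simps)
  \<comment> \<open>Lagrange's identity: both sides are the squared cross product of \<open>v\<close> and \<open>u\<close>.\<close>
  also have "\<dots> = (norm v)\<^sup>2 * (norm (u - v))\<^sup>2 - ((norm v)\<^sup>2 - inner v u)\<^sup>2"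
    unfolding cmod_power2 inner_complex_def by (simp add: power2_eq_square algebra_simps)
  also have "\<dots> = (1 - k\<^sup>2) * (norm v)\<^sup>2 * (norm (u - v))\<^sup>2"
    unfolding at_B by (simp add: power2_eq_square algebra_simps)
  finally have "(1 - k\<^sup>2) * (norm v)\<^sup>2 * (norm u)\<^sup>2 = (1 - k\<^sup>2) * (norm v)\<^sup>2 * (norm (u - v))\<^sup>2" .
  then have "(norm u)\<^sup>2 = (norm (u - v))\<^sup>2"
    using \<open>k\<^sup>2 < 1\<close> False by (simp add: v_def)
  then show ?thesis
    by (simp add: u_def v_def dist_norm norm_minus_commute)
qed simp

lemma rotation_if_angle_at:
  assumes "angle_at V X Y = t" and "dist V X = dist V Y" and "X \<noteq> V"
  shows "Y - V = (X - V) * cis t \<or> Y - V = (X - V) * cis (- t)"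
proof -
  define z where "z = X - V"
  define u where "u = (Y - V) / z"
  have z: "z \<noteq> 0" using assms(3) by (simp add: z_def)
  have Y: "Y - V = z * u" using z by (simp add: u_def)
  have "norm (Y - V) = norm z"
    using assms(2) by (simp add: z_def dist_norm norm_minus_commute)
  then have "norm u = 1"
    using z by (simp add: u_def norm_divide)
  moreover have "(norm z)\<^sup>2 * Re u = cos t * (norm z)\<^sup>2"
    using inner_eq_cos_angle_at[of X V Y] assms(1) \<open>norm u = 1\<close>
    by (simp add: Y z_def[symmetric] inner_mult_right_complex norm_mult power2_eq_square)
  then have "Re u = cos t" using z by simp
  ultimately show ?thesis
    using unimodular_eq_cis Y z_def by metis
qed

lemma norm_cis_pi_div_3_minus_1: "norm (cis (pi / 3) - 1) = 1"
proof -
  have "(norm (cis (pi / 3) - 1))\<^sup>2 = 1"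
    unfolding cmod_power2 by (simp add: cos_60 sin_60 power2_eq_square)
  then show ?thesis
    using norm_ge_zero[of "cis (pi / 3) - 1"] unfolding power2_eq_1_iff by linarith
qed

lemma equilateral_rotate:
  assumes "P \<noteq> Q"
  shows "equilateral P Q (P + (Q - P) * cis (pi / 3))"
proof -
  have "Q - (P + (Q - P) * cis (pi / 3)) = - ((Q - P) * (cis (pi / 3) - 1))"
    by (simp add: algebra_simps)
  then show ?thesis
    using assms norm_cis_pi_div_3_minus_1
    by (simp add: equilateral_def dist_norm norm_mult norm_minus_commute)
qed

lemma equilateral_apex:
  assumes "equilateral P Q R"
  shows "R = P + (Q - P) * cis (pi / 3) \<or> R = P + (Q - P) * cis (- (pi / 3))"
proof -
  define z where "z = Q - P"
  define u where "u = (R - P) / z"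
  have z: "z \<noteq> 0" using assms by (auto simp: equilateral_def z_def)
  have R: "R = P + z * u" using z by (simp add: u_def)
  have "norm (R - P) = norm z" "norm (R - Q) = norm z"
    using assms by (auto simp: equilateral_def dist_norm norm_minus_commute z_def)
  moreover have "R - P = z * u" "R - Q = z * (u - 1)"
    by (simp_all add: R z_def algebra_simps)
  ultimately have "norm u = 1" "norm (u - 1) = 1"
    using z by (simp_all add: norm_mult)
  then have "(Re u)\<^sup>2 + (Im u)\<^sup>2 = 1" "(Re u - 1)\<^sup>2 + (Im u)\<^sup>2 = 1"
    using cmod_power2[of u] cmod_power2[of "u - 1"] by simp_all
  then have "Re u = cos (pi / 3)"
    unfolding cos_60 power2_diff power_one mult_1_right by linarith
  then show ?thesis
    using unimodular_eq_cis[OF \<open>norm u = 1\<close>] R z_def by metis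
qed

lemma tri_area_equilateral:
  assumes "equilateral P Q R"
  shows "tri_area P Q R = sqrt 3 / 4 * (dist P Q)\<^sup>2"
proof -
  have "\<bar>Im (cis (pi / 3))\<bar> = sqrt 3 / 2" "\<bar>Im (cis (- (pi / 3)))\<bar> = sqrt 3 / 2"
    by (simp_all add: sin_60)
  then obtain \<rho> where \<rho>: "R - P = (Q - P) * \<rho>" "\<bar>Im \<rho>\<bar> = sqrt 3 / 2"
    using equilateral_apex[OF assms] by (metis add_diff_cancel_left')
  have "cnj (Q - P) * (R - P) = of_real ((norm (Q - P))\<^sup>2) * \<rho>"
    unfolding \<rho>(1) complex_norm_square by (simp add: algebra_simps)
  then show ?thesis
    by (simp add: tri_area_def \<rho>(2) abs_mult dist_norm norm_minus_commute)
qed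

lemma equilateral_on_unit_interval_in_triangle:
  assumes "P \<in> closed_segment 0 1" and "Q \<in> closed_segment 0 1" and "equilateral P Q R"
    and "R \<in> convex hull {0, 1, cis t}" and "0 \<le> sin t"
  shows "dist P Q * sin (t + pi / 3) \<le> sin t"
proof -
  obtain p q where pq: "P = of_real p" "Q = of_real q" "p \<le> 1" "q \<le> 1"
    using assms(1,2) by (auto simp: in_segment scaleR_conv_of_real)
  obtain b g where bg: "0 \<le> b" "0 \<le> g" "Re R = b + g * cos t" "Im R = g * sin t"
    using assms(4) by (auto simp: convex_hull_3)
  have "Re (cis (pi / 3)) = 1 / 2" "\<bar>Im (cis (pi / 3))\<bar> = sqrt 3 / 2"
    "Re (cis (- (pi / 3))) = 1 / 2" "\<bar>Im (cis (- (pi / 3)))\<bar> = sqrt 3 / 2"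
    by (simp_all add: cos_60 sin_60)
  then obtain \<rho> where \<rho>: "R = P + (Q - P) * \<rho>" "Re \<rho> = 1 / 2" "\<bar>Im \<rho>\<bar> = sqrt 3 / 2"
    using equilateral_apex[OF assms(3)] by blast
  have "Re R = (p + q) / 2"
    using \<rho>(2) unfolding \<rho>(1) pq by (simp add: field_simps flip: of_real_diff)
  moreover have "\<bar>Im R\<bar> = sqrt 3 / 2 * \<bar>q - p\<bar>"
    using \<rho>(3) unfolding \<rho>(1) pq by (simp add: abs_mult flip: of_real_diff)
  moreover have "0 \<le> Im R"
    using bg assms(5) by simp
  ultimately have R: "Re R = (p + q) / 2" "Im R = sqrt 3 / 2 * dist P Q"
    by (simp_all add: pq dist_real_def dist_norm abs_minus_commute flip: of_real_diff)
  have "dist P Q * sin (t + pi / 3) = sin t * (dist P Q / 2) + cos t * Im R"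
    by (simp add: sin_add cos_60 sin_60 R algebra_simps)
  \<comment> \<open>\<open>R\<close> lies on the same side of the line through \<open>0\<close> and \<open>cis t\<close> as \<open>1\<close>.\<close>
  also have "\<dots> \<le> sin t * (dist P Q / 2) + sin t * Re R"
    using bg assms(5) by (simp add: algebra_simps)
  also have "\<dots> \<le> sin t * (dist P Q / 2) + sin t * (1 - dist P Q / 2)"
  proof -
    have "Re R \<le> 1 - dist P Q / 2"
      using pq by (simp add: R dist_norm abs_if flip: of_real_diff)
    then show ?thesis
      using assms(5) by (simp add: mult_left_mono)
  qed
  finally show ?thesis
    by (simp add: algebra_simps)
qed

lemma dist_le_if_in_closed_segment:
  fixes a b :: "'a::real_normed_vector"
  assumes "x \<in> closed_segment a b" and "y \<in> closed_segment a b"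
  shows "dist x y \<le> dist a b"
proof -
  obtain u v where uv: "u \<in> {0..1}" "v \<in> {0..1}"
    "x = (1 - u) *\<^sub>R a + u *\<^sub>R b" "y = (1 - v) *\<^sub>R a + v *\<^sub>R b"
    using assms by (auto simp: in_segment)
  then have "x - y = (u - v) *\<^sub>R (b - a)"
    unfolding uv(3,4) by (simp add: algebra_simps)
  moreover have "\<bar>u - v\<bar> \<le> 1"
    using uv by auto
  ultimately show ?thesis
    by (simp add: dist_norm norm_minus_commute[of a] mult_left_le_one_le)
qed

(* The WETs on side XY are exactly the inscribed triangles of side s, see is_WET_iff_wet_side. *)
definition wet_side :: "complex \<Rightarrow> complex \<Rightarrow> complex \<Rightarrow> complex \<Rightarrow> complex \<Rightarrow> real \<Rightarrow> bool" where
  "wet_side A B C X Y s \<longleftrightarrow>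
     (\<exists>P Q R. inscribed_on_side A B C X Y P Q R \<and> dist P Q = s) \<and>
     (\<forall>P Q R. inscribed_on_side A B C X Y P Q R \<longrightarrow> dist P Q \<le> s)"

lemma wet_side_swap: "wet_side B A C Y X s \<longleftrightarrow> wet_side A B C X Y s"
  by (simp add: wet_side_def inscribed_on_side_def insert_commute closed_segment_commute)

lemma is_WET_iff_wet_side:
  assumes "wet_side A B C X Y s"
  shows "is_WET A B C X Y P Q R \<longleftrightarrow> inscribed_on_side A B C X Y P Q R \<and> dist P Q = s"
proof -
  have area: "tri_area P Q R = sqrt 3 / 4 * (dist P Q)\<^sup>2"
    if "inscribed_on_side A B C X Y P Q R" for P Q R
    using that tri_area_equilateral by (simp add: inscribed_on_side_def)
  obtain P0 Q0 R0 where P0: "inscribed_on_side A B C X Y P0 Q0 R0" "dist P0 Q0 = s"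
    using assms by (auto simp: wet_side_def)
  have bound: "dist P Q \<le> s" if "inscribed_on_side A B C X Y P Q R" for P Q R
    using assms that by (auto simp: wet_side_def)
  show ?thesis
  proof
    assume "is_WET A B C X Y P Q R"
    then have PQR: "inscribed_on_side A B C X Y P Q R" "tri_area P0 Q0 R0 \<le> tri_area P Q R"
      using P0(1) by (auto simp: is_WET_def)
    then have "s\<^sup>2 \<le> (dist P Q)\<^sup>2"
      by (simp add: area P0)
    then have "s \<le> dist P Q"
      by (rule power2_le_imp_le) simp
    with bound[OF PQR(1)] PQR(1) show "inscribed_on_side A B C X Y P Q R \<and> dist P Q = s"
      by simp
  next
    assume PQR: "inscribed_on_side A B C X Y P Q R \<and> dist P Q = s"
    have "tri_area P' Q' R' \<le> tri_area P Q R" if "inscribed_on_side A B C X Y P' Q' R'" for P' Q' R'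
    proof -
      have "(dist P' Q')\<^sup>2 \<le> (dist P Q)\<^sup>2"
        using bound[OF that] PQR by (simp add: power_mono)
      then show ?thesis
        using PQR by (simp add: area that)
    qed
    with PQR show "is_WET A B C X Y P Q R"
      by (simp add: is_WET_def)
  qed
qed

lemma ex_is_WET_if_wet_side: "wet_side A B C X Y s \<Longrightarrow> \<exists>P Q R. is_WET A B C X Y P Q R"
  using is_WET_iff_wet_side by (fastforce simp: wet_side_def)

lemma sides_if_is_WET:
  "wet_side A B C X Y s \<Longrightarrow> is_WET A B C X Y P Q R \<Longrightarrow> dist P Q = s \<and> dist Q R = s \<and> dist R P = s"
  using is_WET_iff_wet_side by (auto simp: inscribed_on_side_def equilateral_def)

locale similarity =
  fixes l :: "complex \<Rightarrow> complex" and r :: real and c :: complex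
  assumes linear_map: "linear l" and norm_map: "\<And>z. norm (l z) = r * norm z"
    and ratio_pos: "0 < r"
begin

definition sim :: "complex \<Rightarrow> complex" where
  "sim z = c + l z"

lemma dist_sim: "dist (sim x) (sim y) = r * dist x y"
  using norm_map[of "x - y"] by (simp add: sim_def dist_norm linear_diff[OF linear_map])

lemma inj_sim: "inj sim"
  using dist_sim ratio_pos by (intro injI) (metis dist_eq_0_iff mult_eq_0_iff less_irrefl)

lemma surj_sim: "surj sim"
proof -
  have "inj l"
    using inj_sim unfolding inj_def sim_def by simp
  then have "surj l"
    using linear_inj_imp_surj linear_map by blast
  then have "z = sim (inv l (z - c))" for z
    by (simp add: sim_def surj_f_inv_f)
  then show ?thesis by blast
qed

lemma sim_image: "sim ` S = (\<lambda>x. c + x) ` (l ` S)"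
  by (auto simp: sim_def)

lemma closed_segment_sim: "closed_segment (sim x) (sim y) = sim ` closed_segment x y"
  unfolding sim_image sim_def closed_segment_translation closed_segment_linear_image[OF linear_map] ..

lemma convex_hull_sim: "convex hull (sim ` S) = sim ` (convex hull S)"
  unfolding sim_image convex_hull_translation convex_hull_linear_image[OF linear_map] ..

lemma inscribed_on_side_sim_iff:
  "inscribed_on_side (sim A) (sim B) (sim C) (sim X) (sim Y) (sim P) (sim Q) (sim R) \<longleftrightarrow>
   inscribed_on_side A B C X Y P Q R"
proof -
  have "equilateral (sim P) (sim Q) (sim R) \<longleftrightarrow> equilateral P Q R"
    using ratio_pos by (auto simp: equilateral_def dist_sim zero_less_mult_iff)
  moreover have "convex hull {sim P, sim Q, sim R} = sim ` (convex hull {P, Q, R})"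
    "convex hull {sim A, sim B, sim C} = sim ` (convex hull {A, B, C})"
    using convex_hull_sim[of "{_, _, _}"] by simp_all
  ultimately show ?thesis
    unfolding inscribed_on_side_def closed_segment_sim
    by (simp add: inj_image_subset_iff[OF inj_sim])
qed

lemma wet_side_sim:
  assumes "wet_side A B C X Y s"
  shows "wet_side (sim A) (sim B) (sim C) (sim X) (sim Y) (r * s)"
  unfolding wet_side_def
proof safe
  obtain P Q R where "inscribed_on_side A B C X Y P Q R" "dist P Q = s"
    using assms by (auto simp: wet_side_def)
  then show "\<exists>P Q R. inscribed_on_side (sim A) (sim B) (sim C) (sim X) (sim Y) P Q R \<and>
      dist P Q = r * s"
    by (metis inscribed_on_side_sim_iff dist_sim)
next
  fix P' Q' R'
  assume "inscribed_on_side (sim A) (sim B) (sim C) (sim X) (sim Y) P' Q' R'"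
  moreover obtain P Q R where "P' = sim P" "Q' = sim Q" "R' = sim R"
    using surj_sim by (metis surjD)
  ultimately have "dist P Q \<le> s"
    using assms by (auto simp: wet_side_def inscribed_on_side_sim_iff)
  then show "dist P' Q' \<le> r * s"
    using ratio_pos by (simp add: \<open>P' = sim P\<close> \<open>Q' = sim Q\<close> dist_sim)
qed

end

lemma similarity_mult: "a \<noteq> 0 \<Longrightarrow> similarity ((*) a) (norm a)"
  by unfold_locales (auto simp: norm_mult scaleR_conv_of_real algebra_simps)

lemma similarity_mult_cnj: "a \<noteq> 0 \<Longrightarrow> similarity (\<lambda>z. a * cnj z) (norm a)"
  by unfold_locales (auto simp: norm_mult scaleR_conv_of_real algebra_simps)

lemma sin_pi_div_18_bounds: "0 < sin (pi / 18)" "sin (pi / 18) < 1 / 4"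
proof -
  show "0 < sin (pi / 18)"
    by (rule sin_gt_zero) simp_all
  have "sin (pi / 18) \<le> pi / 18"
    by (rule sin_x_le_x) simp
  then show "sin (pi / 18) < 1 / 4"
    using pi_less_4 by linarith
qed

lemma cos_pi_div_18_pos: "0 < cos (pi / 18)"
  by (rule cos_gt_zero_pi) simp_all

(* With s = sin (pi / 18) and c = cos (pi / 18), these two identities and s^2 + c^2 = 1 turn
   every coordinate computation for the normalised triangle into a polynomial identity. *)
lemma sin_pi_div_18_cubic: "8 * sin (pi / 18) ^ 3 - 6 * sin (pi / 18) + 1 = 0"
proof -
  have "1 / 2 = sin (2 * (pi / 18) + pi / 18)"
    using sin_30 by simp
  also have "\<dots> = 3 * sin (pi / 18) - 4 * sin (pi / 18) ^ 3"
    unfolding sin_add sin_double cos_double_sin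
    using sin_cos_squared_add[of "pi / 18"] by algebra
  finally show ?thesis by simp
qed

lemma sqrt_3_eq: "sqrt 3 = 2 * cos (pi / 18) * (1 - 4 * (sin (pi / 18))\<^sup>2)"
proof -
  have "sqrt 3 / 2 = cos (3 * (pi / 18))"
    using cos_30 by simp
  also have "\<dots> = cos (pi / 18) * (1 - 4 * (sin (pi / 18))\<^sup>2)"
    unfolding cos_treble_cos
    using sin_cos_squared_add[of "pi / 18"] by algebra
  finally show ?thesis by simp
qed

lemma cis_pi_div_9: "cis (pi / 9) = Complex (1 - 2 * (sin (pi / 18))\<^sup>2) (2 * sin (pi / 18) * cos (pi / 18))"
proof -
  have "cis (pi / 9) = Complex (cos (2 * (pi / 18))) (sin (2 * (pi / 18)))"
    by (simp add: cis.ctr)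
  then show ?thesis
    by (simp only: cos_double_sin sin_double)
qed

lemma dist_le_if_inscribed_on_side_CA_normal:
  assumes "inscribed_on_side 1 (cis (pi / 9)) 0 0 1 P Q R"
  shows "dist P Q \<le> 2 * sin (pi / 18)"
proof -
  have "P \<in> closed_segment 0 1" "Q \<in> closed_segment 0 1" "equilateral P Q R"
    "R \<in> convex hull {0, 1, cis (pi / 9)}"
    using assms by (auto simp: inscribed_on_side_def insert_commute intro: hull_inc)
  then have "dist P Q * sin (pi / 9 + pi / 3) \<le> sin (pi / 9)"
    by (rule equilateral_on_unit_interval_in_triangle) (simp add: sin_ge_zero)
  moreover have "sin (pi / 9 + pi / 3) = cos (pi / 18)"
    "sin (pi / 9) = 2 * sin (pi / 18) * cos (pi / 18)"
    using cis_pi_div_9 by (simp_all add: cos_sin_eq complex_eq_iff)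
  ultimately show ?thesis
    using cos_pi_div_18_pos by (simp add: mult.commute mult.left_commute)
qed

lemma wet_side_CA_normal: "wet_side 1 (cis (pi / 9)) 0 0 1 (2 * sin (pi / 18))"
proof -
  define s c where "s = sin (pi / 18)" and "c = cos (pi / 18)"
  have s: "0 < s" "s < 1 / 4"
    using sin_pi_div_18_bounds by (simp_all add: s_def)
  then have s2: "4 * s\<^sup>2 < 1"
    using mult_strict_mono[of s "1 / 4" s 1] by (simp add: power2_eq_square)
  define P Q R where "P = complex_of_real (1 - 2 * s)" and "Q = 1"
    and "R = P + (Q - P) * cis (pi / 3)"
  have "P \<in> closed_segment 0 1"
    using s unfolding in_segment P_def by (auto intro!: exI[of _ "1 - 2 * s"] simp: scaleR_conv_of_real)
  then have PQ: "closed_segment P Q \<subseteq> closed_segment 0 1"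
    by (simp add: subset_closed_segment Q_def)
  \<comment> \<open>The apex lies on the side through \<open>0\<close> and \<open>cis (pi / 9)\<close>.\<close>
  have "R = of_real (1 - 4 * s\<^sup>2) * cis (pi / 9)"
    using sin_pi_div_18_cubic sqrt_3_eq sin_cos_squared_add[of "pi / 18"]
    unfolding complex_eq_iff R_def P_def Q_def cis_pi_div_9 s_def[symmetric] c_def[symmetric]
    by (simp add: cos_60 sin_60) algebra
  then have "R \<in> closed_segment 0 (cis (pi / 9))"
    using s2 unfolding in_segment by (auto intro!: exI[of _ "1 - 4 * s\<^sup>2"] simp: scaleR_conv_of_real)
  moreover have "closed_segment 0 1 \<subseteq> convex hull {1, cis (pi / 9), 0}"
    "closed_segment 0 (cis (pi / 9)) \<subseteq> convex hull {1, cis (pi / 9), 0}"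
    by (simp_all add: closed_segment_subset_convex_hull hull_inc)
  ultimately have "{P, Q, R} \<subseteq> convex hull {1, cis (pi / 9), 0}"
    using PQ by auto
  moreover have "equilateral P Q R"
    using s unfolding R_def by (intro equilateral_rotate) (simp add: P_def Q_def)
  ultimately have "inscribed_on_side 1 (cis (pi / 9)) 0 0 1 P Q R"
    using PQ by (simp add: inscribed_on_side_def convex_hull_subset)
  moreover have "P - Q = of_real (- 2 * s)"
    by (simp add: P_def Q_def)
  then have "dist P Q = 2 * s"
    using s by (simp add: dist_norm)
  ultimately show ?thesis
    using dist_le_if_inscribed_on_side_CA_normal unfolding wet_side_def s_def by blast
qed

lemma wet_side_BC_normal: "wet_side 1 (cis (pi / 9)) 0 (cis (pi / 9)) 0 (2 * sin (pi / 18))"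
proof -
  interpret reflection: similarity "\<lambda>z. cis (pi / 9) * cnj z" 1 0
    using similarity_mult_cnj[of "cis (pi / 9)"] by simp
  have "reflection.sim 1 = cis (pi / 9)" "reflection.sim (cis (pi / 9)) = 1" "reflection.sim 0 = 0"
    by (simp_all add: reflection.sim_def cis_cnj cis_mult)
  then show ?thesis
    using reflection.wet_side_sim[OF wet_side_CA_normal]
      wet_side_swap[where A = 1 and B = "cis (pi / 9)" and X = "cis (pi / 9)" and Y = 0]
    by simp
qed

lemma wet_side_AB_normal: "wet_side 1 (cis (pi / 9)) 0 1 (cis (pi / 9)) (2 * sin (pi / 18))"
proof -
  define s c where "s = sin (pi / 18)" and "c = cos (pi / 18)"
  have s: "0 < s" "s < 1 / 4"
    using sin_pi_div_18_bounds by (simp_all add: s_def)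
  have "(dist 1 (cis (pi / 9)))\<^sup>2 = (2 * s)\<^sup>2"
    using sin_cos_squared_add[of "pi / 18"]
    unfolding dist_norm cmod_power2 cis_pi_div_9 s_def[symmetric] c_def[symmetric]
    by simp algebra
  then have side: "dist 1 (cis (pi / 9)) = 2 * s"
    by (rule power2_eq_imp_eq) (use s in simp_all)
  define R where "R = 1 + (cis (pi / 9) - 1) * cis (pi / 3)"
  \<comment> \<open>The apex lies on the bisector of the angle at \<open>0\<close>.\<close>
  have "R = (2 * s) *\<^sub>R 1 + (2 * s) *\<^sub>R cis (pi / 9) + (1 - 4 * s) *\<^sub>R 0"
    using sin_pi_div_18_cubic sqrt_3_eq sin_cos_squared_add[of "pi / 18"]
    unfolding complex_eq_iff R_def cis_pi_div_9 s_def[symmetric] c_def[symmetric]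
    by (simp add: cos_60 sin_60) algebra
  moreover have "0 \<le> 2 * s" "0 \<le> 1 - 4 * s" "2 * s + 2 * s + (1 - 4 * s) = 1"
    using s by simp_all
  ultimately have "R \<in> convex hull {1, cis (pi / 9), 0}"
    unfolding convex_hull_3 by blast
  then have "convex hull {1, cis (pi / 9), R} \<subseteq> convex hull {1, cis (pi / 9), 0}"
    by (simp add: convex_hull_subset hull_inc)
  moreover have "equilateral 1 (cis (pi / 9)) R"
    unfolding R_def by (rule equilateral_rotate) (use side s in auto)
  ultimately have "inscribed_on_side 1 (cis (pi / 9)) 0 1 (cis (pi / 9)) 1 (cis (pi / 9)) R"
    by (simp add: inscribed_on_side_def)
  moreover have "dist P Q \<le> 2 * s"
    if "inscribed_on_side 1 (cis (pi / 9)) 0 1 (cis (pi / 9)) P Q R" for P Q R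
    using that dist_le_if_in_closed_segment[of P 1 "cis (pi / 9)" Q] side
    by (auto simp: inscribed_on_side_def subset_closed_segment)
  ultimately show ?thesis
    unfolding wet_side_def s_def[symmetric] using side by blast
qed

lemma wet_sides_if_apex_rotation:
  assumes "A \<noteq> C" and "B - C = (A - C) * cis (pi / 9) \<or> B - C = (A - C) * cis (- (pi / 9))"
  shows "\<exists>s. wet_side A B C B C s \<and> wet_side A B C C A s \<and> wet_side A B C A B s"
proof -
  obtain l where l: "similarity l (norm (A - C))" "l 1 = A - C" "l (cis (pi / 9)) = B - C"
    using assms(2)
  proof
    assume "B - C = (A - C) * cis (pi / 9)"
    then show thesis
      using that[of "(*) (A - C)"] similarity_mult assms(1) by simp
  next
    assume "B - C = (A - C) * cis (- (pi / 9))"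
    then show thesis
      using that[of "\<lambda>z. (A - C) * cnj z"] similarity_mult_cnj assms(1) by (simp add: cis_cnj)
  qed
  interpret similarity l "norm (A - C)" C
    by (fact l(1))
  have "sim 1 = A" "sim (cis (pi / 9)) = B" "sim 0 = C"
    using l linear_0[OF linear_map] by (simp_all add: sim_def)
  then show ?thesis
    using wet_side_sim[OF wet_side_BC_normal] wet_side_sim[OF wet_side_CA_normal]
      wet_side_sim[OF wet_side_AB_normal]
    by auto
qed

theorem mainTheorem5:
  fixes A B C :: complex
  assumes "angle_at A B C = 80 * pi / 180"
      and "angle_at B C A = 80 * pi / 180"
      and "angle_at C A B = 20 * pi / 180"
  shows "(\<exists>P Q R. is_WET A B C B C P Q R) \<and>
         (\<exists>P Q R. is_WET A B C C A P Q R) \<and>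
         (\<exists>P Q R. is_WET A B C A B P Q R) \<and>
         (\<forall>P1 Q1 R1 P2 Q2 R2 P3 Q3 R3.
            is_WET A B C B C P1 Q1 R1 \<and> is_WET A B C C A P2 Q2 R2 \<and>
            is_WET A B C A B P3 Q3 R3 \<longrightarrow>
            tri_congruent P1 Q1 R1 P2 Q2 R2 \<and> tri_congruent P2 Q2 R2 P3 Q3 R3)"
proof -
  have "dist C A = dist C B"
    by (rule dist_eq_if_base_angles_eq) (simp_all add: assms(1,2))
  moreover have "A \<noteq> C"
  proof
    assume "A = C"
    with assms(3) have "pi / 2 = 20 * pi / 180"
      by (metis angle_at_same)
    with pi_gt_zero show False
      by linarith
  qed
  moreover have "angle_at C A B = pi / 9"
    using assms(3) by simp
  ultimately have "B - C = (A - C) * cis (pi / 9) \<or> B - C = (A - C) * cis (- (pi / 9))"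
    by (intro rotation_if_angle_at) simp_all
  then obtain s where "wet_side A B C B C s" "wet_side A B C C A s" "wet_side A B C A B s"
    using wet_sides_if_apex_rotation \<open>A \<noteq> C\<close> by blast
  then show ?thesis
    using ex_is_WET_if_wet_side sides_if_is_WET unfolding tri_congruent_def by metis
qed

end
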